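(* Let $g:\mathbb{R}^m\to\overline{\mathbb{R}}$ be a polyhedral function, written in the form $$g(z)=\max_{j\in J}\{\langle a^j,z\rangle-\alpha_j\}+\delta_{\mathrm{dom}\, g}(z),\qquad \mathrm{dom}\, g=\{z\in\mathbb{R}^m\mid \langle b^i,z\rangle\le\beta_i,\ i\in I\},$$ with $J=\{1,\dots,l\}$, $I=\{1,\dots,s\}$, $a^j,b^i\in\mathbb{R}^m$, $\alpha_j,\beta_i\in\mathbb{R}$. Let $(\bar z,\bar\lambda)\in\mathrm{gph}\,\partial g$. Then there exists $r>0$ such that for every decomposition $$\bar\lambda=\sum_{j\in J(\bar z)}\bar\sigma_j a^j+\sum_{i\in I(\bar z)}\bar\tau_i b^i,\qquad \bar\sigma_j,\bar\tau_i\ge 0,\ \sum_{j\in J(\bar z)}\bar\sigma_j=1,$$ and every $(z,\lambda)\in(\mathrm{gph}\,\partial g)\cap\mathbb{B}_r(\bar z,\bar\lambda)$, we have $$J_+(\bar z,\bar\sigma)\subset J(z)\quad\text{and}\quad I_+(\bar z,\bar\tau)\subset I(z).$$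
   Context: A proper function $g:\mathbb{R}^m\to\overline{\mathbb{R}}=[-\infty,\infty]$ is polyhedral if its epigraph is a polyhedral convex set; every such function admits a representation as in the claim. $\delta_C$ denotes the indicator function of $C$ ($0$ on $C$, $+\infty$ outside). For $j\in J$ set $C_j=\{z\in\mathrm{dom}\, g\mid g(z)=\langle a^j,z\rangle-\alpha_j\}$. For $z\in\mathrm{dom}\, g$ define the active index sets $I(z)=\{i\in I\mid\langle b^i,z\rangle=\beta_i\}$ and $J(z)=\{j\in J\mid z\in C_j\}$. The subdifferential $\partial g$ is that of convex analysis; one has $\partial g(\bar z)=\mathrm{co}\{a^j\mid j\in J(\bar z)\}+\mathrm{cone}\{b^i\mid i\in I(\bar z)\}$, so every $\bar\lambda\in\partial g(\bar z)$ has (generally non-unique) decompositions as in the claim. Given such a decomposition, $J_+(\bar z,\bar\sigma)=\{j\in J(\bar z)\mid\bar\sigma_j>0\}$ and $I_+(\bar z,\bar\tau)=\{i\in I(\bar z)\mid \bar\tau_i>0\}$. $\mathbb{B}_r(x)$ is the closed ball of radius $r$ centered at $x$; on $\mathbb{R}^m\times\mathbb{R}^m$ the Euclidean norm $\|(w,u)\|=\sqrt{\|w\|^2+\|u\|^2}$ is used. *)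

theory Defs
  imports "HOL-Analysis.Analysis"
begin

definition polyfun ::
  "(nat \<Rightarrow> real^'m) \<Rightarrow> (nat \<Rightarrow> real) \<Rightarrow> (nat \<Rightarrow> real^'m) \<Rightarrow> (nat \<Rightarrow> real)
     \<Rightarrow> nat \<Rightarrow> nat \<Rightarrow> real^'m \<Rightarrow> ereal" where
  "polyfun a \<alpha> b \<beta> l s z =
     (if (\<forall>i\<in>{1..s}. b i \<bullet> z \<le> \<beta> i)
      then ereal (MAX j\<in>{1..l}. a j \<bullet> z - \<alpha> j) else \<infinity>)"

definition edom :: "('a \<Rightarrow> ereal) \<Rightarrow> 'a set" where
  "edom f = {z. f z < \<infinity>}"

definition subdiff :: "('a::real_inner \<Rightarrow> ereal) \<Rightarrow> 'a \<Rightarrow> 'a set" where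
  "subdiff f x = {v. \<bar>f x\<bar> \<noteq> \<infinity> \<and> (\<forall>y. f x + ereal (v \<bullet> (y - x)) \<le> f y)}"

definition gph_subdiff :: "('a::real_inner \<Rightarrow> ereal) \<Rightarrow> ('a \<times> 'a) set" where
  "gph_subdiff f = {(z, v). v \<in> subdiff f z}"

definition actI :: "(nat \<Rightarrow> 'a::real_inner) \<Rightarrow> (nat \<Rightarrow> real) \<Rightarrow> nat \<Rightarrow> 'a \<Rightarrow> nat set" where
  "actI b \<beta> s z = {i\<in>{1..s}. b i \<bullet> z = \<beta> i}"

definition actJ :: "('a \<Rightarrow> ereal) \<Rightarrow> (nat \<Rightarrow> 'a::real_inner) \<Rightarrow> (nat \<Rightarrow> real) \<Rightarrow> nat \<Rightarrow> 'a \<Rightarrow> nat set" where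
  "actJ g a \<alpha> l z = {j\<in>{1..l}. z \<in> edom g \<and> g z = ereal (a j \<bullet> z - \<alpha> j)}"

end

theory Submission
  imports Defs
begin

text \<open>
  Lift the data to \<open>(a\<^sub>j, 1)\<close> and \<open>(b\<^sub>i, 0)\<close>. A separation argument shows that
  every \<open>v \<in> \<partial>g(z)\<close> satisfies \<open>(v, 1) \<in> K(J(z), I(z))\<close>, the convex cone generated by the
  lifted data with active indices, and conversely \<open>(v, 1) \<in> K(J(z), I(z))\<close> makes \<open>v\<close> a
  subgradient at \<open>z\<close>. There are only finitely many such cones and they are closed, so
  for \<open>v\<close> close enough to \<open>\<lambda>\<close> the cone containing \<open>(v, 1)\<close> also contains \<open>(\<lambda>, 1)\<close>:
  \<open>\<lambda>\<close> is a subgradient at \<open>z\<close> as well. A common subgradient at \<open>z\<close> and \<open>z\<^sub>0\<close> forces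
  \<open>g(z) = g(z\<^sub>0) + \<langle>\<lambda>, z - z\<^sub>0\<rangle>\<close>; inserting the decomposition of \<open>\<lambda>\<close> turns this into
  \<open>\<Sum>\<sigma>\<^sub>j (\<langle>a\<^sub>j, z\<rangle> - \<alpha>\<^sub>j - g(z)) + \<Sum>\<tau>\<^sub>i (\<langle>b\<^sub>i, z\<rangle> - \<beta>\<^sub>i) = 0\<close>, a sum of nonpositive terms,
  so every term with a positive weight vanishes.
\<close>

lemma convex_cone_separation:
  fixes K :: "'a::euclidean_space set"
  assumes "convex_cone K" "closed K" "x \<notin> K"
  obtains w where "w \<bullet> x < 0" "\<And>y. y \<in> K \<Longrightarrow> 0 \<le> w \<bullet> y"
proof -
  obtain w t where wx: "w \<bullet> x < t" and wK: "\<forall>y\<in>K. t < w \<bullet> y"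
    using separating_hyperplane_closed_point[OF _ assms(2,3)] assms(1)
    by (auto simp: convex_cone_def)
  have "t < 0"
    using wK convex_cone_contains_0[OF assms(1)] by auto
  have "0 \<le> w \<bullet> y" if "y \<in> K" for y
  proof (rule ccontr)
    assume "\<not> 0 \<le> w \<bullet> y"
    then have "w \<bullet> y < 0" by simp
    then have "(t / (w \<bullet> y)) *\<^sub>R y \<in> K"
      using convex_cone_scaleR[OF assms(1) _ that] \<open>t < 0\<close> by (simp add: zero_le_divide_iff)
    with wK \<open>w \<bullet> y < 0\<close> show False by auto
  qed
  with wx \<open>t < 0\<close> show thesis by (intro that) auto
qed

lemma finite_closed_sets_uniform_radius:
  fixes x :: "'a::metric_space"
  assumes "finite \<C>" "\<And>C. C \<in> \<C> \<Longrightarrow> closed C"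
  obtains r where "r > 0" "\<And>C y. C \<in> \<C> \<Longrightarrow> y \<in> C \<Longrightarrow> dist x y \<le> r \<Longrightarrow> x \<in> C"
proof -
  have "\<forall>\<^sub>F r in at_right 0. \<forall>y\<in>C. dist x y \<le> r \<longrightarrow> x \<in> C" if C: "C \<in> \<C>" for C
  proof (cases "x \<in> C")
    case False
    then obtain e where "e > 0" "ball x e \<subseteq> - C"
      using open_contains_ball assms(2)[OF C] by (metis ComplI open_Compl)
    then show ?thesis
      unfolding eventually_at_right_field by (intro exI[of _ e]) (force simp: subset_iff)
  qed simp
  then have "\<forall>\<^sub>F r in at_right 0. 0 < r \<and> (\<forall>C\<in>\<C>. \<forall>y\<in>C. dist x y \<le> r \<longrightarrow> x \<in> C)"
    by (intro eventually_conj eventually_at_right_less eventually_ball_finite assms(1)) blast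
  then show thesis
    using eventually_happens'[OF trivial_limit_at_right_real] that by blast
qed

lemma eventually_at_right_0_less:
  fixes c d k :: real
  assumes "c < d"
  shows "\<forall>\<^sub>F h in at_right 0. c + h * k < d"
proof -
  have "((\<lambda>h. c + h * k) \<longlongrightarrow> c + 0 * k) (at_right 0)"
    by (intro tendsto_intros)
  with assms show ?thesis by (simp add: order_tendstoD(2))
qed

lemma weighted_sum_nonpos_eq_0D:
  fixes c f :: "'i \<Rightarrow> real"
  assumes "finite A" "\<forall>x\<in>A. 0 \<le> c x" "\<forall>x\<in>A. f x \<le> 0" "(\<Sum>x\<in>A. c x * f x) = 0"
    and "x \<in> A" "0 < c x"
  shows "f x = 0"
proof -
  have "\<forall>x\<in>A. - (c x * f x) = 0"
    using assms(1-4) by (subst sum_nonneg_eq_0_iff[symmetric]) (auto simp: sum_negf mult_nonneg_nonpos)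
  with assms(5,6) show ?thesis by auto
qed

lemma subdiff_common_eq:
  fixes f :: "'a::real_inner \<Rightarrow> ereal"
  assumes "v \<in> subdiff f x" "v \<in> subdiff f y"
  shows "f y = f x + ereal (v \<bullet> (y - x))"
proof -
  obtain fx fy where "f x = ereal fx" "f y = ereal fy"
    using assms by (auto simp: subdiff_def)
  moreover have "fx + v \<bullet> (y - x) \<le> fy" "fy + v \<bullet> (x - y) \<le> fx"
  proof -
    have "f x + ereal (v \<bullet> (y - x)) \<le> f y" "f y + ereal (v \<bullet> (x - y)) \<le> f x"
      using assms by (auto simp: subdiff_def)
    with calculation show "fx + v \<bullet> (y - x) \<le> fy" "fy + v \<bullet> (x - y) \<le> fx"
      by simp_all
  qed
  moreover have "v \<bullet> (x - y) = - (v \<bullet> (y - x))"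
    by (simp add: inner_diff_right)
  ultimately show ?thesis by simp
qed

text \<open>The slice \<open>{v. (v, 1) \<in> lifted_cone a b J I}\<close> is the set
  \<open>co {a\<^sub>j | j \<in> J} + cone {b\<^sub>i | i \<in> I}\<close> of the subdifferential formula.\<close>

definition lifted_cone ::
    "(nat \<Rightarrow> 'a::real_vector) \<Rightarrow> (nat \<Rightarrow> 'a) \<Rightarrow> nat set \<Rightarrow> nat set \<Rightarrow> ('a \<times> real) set" where
  "lifted_cone a b J I = convex_cone hull ((\<lambda>j. (a j, 1)) ` J \<union> (\<lambda>i. (b i, 0)) ` I)"

lemma convex_cone_lifted_cone: "convex_cone (lifted_cone a b J I)"
  by (simp add: lifted_cone_def convex_cone_convex_cone_hull)

lemma closed_lifted_cone:
  fixes a b :: "nat \<Rightarrow> 'a::euclidean_space"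
  shows "finite J \<Longrightarrow> finite I \<Longrightarrow> closed (lifted_cone a b J I)"
  by (simp add: lifted_cone_def closed_convex_cone_hull)

lemma lifted_cone_generators:
  "j \<in> J \<Longrightarrow> (a j, 1) \<in> lifted_cone a b J I"
  "i \<in> I \<Longrightarrow> (b i, 0) \<in> lifted_cone a b J I"
  by (simp_all add: lifted_cone_def hull_inc)

locale polyhedral_function =
  fixes a :: "nat \<Rightarrow> real^'m" and \<alpha> :: "nat \<Rightarrow> real"
    and b :: "nat \<Rightarrow> real^'m" and \<beta> :: "nat \<Rightarrow> real" and l s :: nat
  assumes pieces_nonempty: "1 \<le> l"
begin

abbreviation "g \<equiv> polyfun a \<alpha> b \<beta> l s"
abbreviation "gmax z \<equiv> MAX j\<in>{1..l}. a j \<bullet> z - \<alpha> j"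
abbreviation "J z \<equiv> actJ g a \<alpha> l z"
abbreviation "I z \<equiv> actI b \<beta> s z"

lemma mem_edom: "z \<in> edom g \<longleftrightarrow> (\<forall>i\<in>{1..s}. b i \<bullet> z \<le> \<beta> i)"
  by (simp add: edom_def polyfun_def)

lemma g_eq_gmax: "z \<in> edom g \<Longrightarrow> g z = ereal (gmax z)"
  by (simp add: mem_edom polyfun_def)

lemma gmax_ge: "j \<in> {1..l} \<Longrightarrow> a j \<bullet> z - \<alpha> j \<le> gmax z"
  by (rule Max_ge) auto

lemma gmax_le: "(\<And>j. j \<in> {1..l} \<Longrightarrow> a j \<bullet> z - \<alpha> j \<le> c) \<Longrightarrow> gmax z \<le> c"
  using pieces_nonempty by (subst Max_le_iff) auto

lemma J_eq: "z \<in> edom g \<Longrightarrow> J z = {j\<in>{1..l}. a j \<bullet> z - \<alpha> j = gmax z}"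
  by (auto simp: actJ_def g_eq_gmax)

lemma J_subset: "J z \<subseteq> {1..l}" and I_subset: "I z \<subseteq> {1..s}"
  by (auto simp: actJ_def actI_def)

lemma finite_J: "finite (J z)" and finite_I: "finite (I z)"
  by (rule finite_subset[OF J_subset] finite_subset[OF I_subset], simp)+

lemma subdiff_g_iff:
  "v \<in> subdiff g z \<longleftrightarrow> z \<in> edom g \<and> (\<forall>y\<in>edom g. gmax z + v \<bullet> (y - z) \<le> gmax y)"
proof -
  have finite_iff: "\<bar>g z\<bar> \<noteq> \<infinity> \<longleftrightarrow> z \<in> edom g"
    by (simp add: edom_def polyfun_def)
  have ineq_iff: "g z + ereal (v \<bullet> (y - z)) \<le> g y \<longleftrightarrow> gmax z + v \<bullet> (y - z) \<le> gmax y"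
    if "z \<in> edom g" "y \<in> edom g" for y
    using that by (simp only: g_eq_gmax plus_ereal.simps ereal_less_eq)
  have "g y = \<infinity>" if "y \<notin> edom g" for y
    using that by (simp add: edom_def)
  then show ?thesis
    unfolding subdiff_def mem_Collect_eq finite_iff using ineq_iff by force
qed

lemma eventually_in_edom:
  assumes z: "z \<in> edom g" and I_dir: "\<And>i. i \<in> I z \<Longrightarrow> b i \<bullet> u \<le> 0"
  shows "\<forall>\<^sub>F h in at_right 0. z + h *\<^sub>R u \<in> edom g"
proof -
  have "\<forall>\<^sub>F h in at_right 0. b i \<bullet> (z + h *\<^sub>R u) \<le> \<beta> i" if i: "i \<in> {1..s}" for i
  proof (cases "i \<in> I z")
    case True
    then have "b i \<bullet> (z + h *\<^sub>R u) \<le> \<beta> i" if "0 < h" for h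
      using I_dir[OF True] that by (simp add: actI_def inner_add_right mult_nonneg_nonpos)
    then show ?thesis
      by (intro eventually_mono[OF eventually_at_right_less])
  next
    case False
    with z i have "b i \<bullet> z < \<beta> i"
      by (force simp: mem_edom actI_def)
    then have "\<forall>\<^sub>F h in at_right 0. b i \<bullet> z + h * (b i \<bullet> u) < \<beta> i"
      by (rule eventually_at_right_0_less)
    then show ?thesis
      by (rule eventually_mono) (simp add: inner_add_right)
  qed
  then show ?thesis
    by (simp add: mem_edom eventually_ball_finite)
qed

lemma eventually_gmax_le:
  assumes z: "z \<in> edom g" and J_dir: "\<And>j. j \<in> J z \<Longrightarrow> a j \<bullet> u \<le> e"
  shows "\<forall>\<^sub>F h in at_right 0. gmax (z + h *\<^sub>R u) \<le> gmax z + h * e"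
proof -
  have "\<forall>\<^sub>F h in at_right 0. a j \<bullet> (z + h *\<^sub>R u) - \<alpha> j \<le> gmax z + h * e" if j: "j \<in> {1..l}" for j
  proof (cases "j \<in> J z")
    case True
    with z have "a j \<bullet> z - \<alpha> j = gmax z"
      by (simp add: J_eq)
    then have "a j \<bullet> (z + h *\<^sub>R u) - \<alpha> j \<le> gmax z + h * e" if "0 < h" for h
    proof -
      have "h * (a j \<bullet> u) \<le> h * e"
        using J_dir[OF True] that by simp
      with \<open>a j \<bullet> z - \<alpha> j = gmax z\<close> show ?thesis
        unfolding inner_add_right inner_scaleR_right by linarith
    qed
    then show ?thesis
      by (intro eventually_mono[OF eventually_at_right_less])
  next
    case False
    with z j have "a j \<bullet> z - \<alpha> j \<noteq> gmax z"
      by (auto simp: J_eq)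
    with gmax_ge[OF j, of z] have "a j \<bullet> z - \<alpha> j < gmax z"
      by linarith
    then have "\<forall>\<^sub>F h in at_right 0. (a j \<bullet> z - \<alpha> j) + h * (a j \<bullet> u - e) < gmax z"
      by (rule eventually_at_right_0_less)
    then show ?thesis
      by (rule eventually_mono) (simp add: inner_add_right algebra_simps)
  qed
  then have "\<forall>\<^sub>F h in at_right 0. \<forall>j\<in>{1..l}. a j \<bullet> (z + h *\<^sub>R u) - \<alpha> j \<le> gmax z + h * e"
    by (simp add: eventually_ball_finite)
  then show ?thesis
    by (rule eventually_mono) (intro gmax_le, blast)
qed

lemma descent_step:
  assumes "z \<in> edom g"
    and "\<And>i. i \<in> I z \<Longrightarrow> b i \<bullet> u \<le> 0" and "\<And>j. j \<in> J z \<Longrightarrow> a j \<bullet> u \<le> e"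
  obtains h where "0 < h" "z + h *\<^sub>R u \<in> edom g" "gmax (z + h *\<^sub>R u) \<le> gmax z + h * e"
proof -
  have "\<forall>\<^sub>F h in at_right 0. 0 < h \<and> z + h *\<^sub>R u \<in> edom g \<and> gmax (z + h *\<^sub>R u) \<le> gmax z + h * e"
    using assms by (intro eventually_conj eventually_at_right_less eventually_in_edom eventually_gmax_le)
  then show thesis
    using eventually_happens'[OF trivial_limit_at_right_real] that by blast
qed

lemma subgradient_imp_lifted_cone:
  assumes v: "v \<in> subdiff g z"
  shows "(v, 1) \<in> lifted_cone a b (J z) (I z)"
proof (rule ccontr)
  assume "(v, 1) \<notin> lifted_cone a b (J z) (I z)"
  then obtain w where w_v: "w \<bullet> (v, 1) < 0" and w_cone: "\<And>y. y \<in> lifted_cone a b (J z) (I z) \<Longrightarrow> 0 \<le> w \<bullet> y"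
    using convex_cone_separation convex_cone_lifted_cone closed_lifted_cone finite_J finite_I
    by metis
  obtain d e where w: "w = (d, e)" by fastforce
  \<comment> \<open>Along \<open>-d\<close> the function \<open>g\<close> grows at rate at most \<open>e\<close>, while \<open>v\<close> predicts the larger rate \<open>-v \<bullet> d\<close>.\<close>
  from v have z: "z \<in> edom g" and sub: "\<And>y. y \<in> edom g \<Longrightarrow> gmax z + v \<bullet> (y - z) \<le> gmax y"
    by (simp_all add: subdiff_g_iff)
  have "b i \<bullet> (- d) \<le> 0" if "i \<in> I z" for i
    using w_cone[OF lifted_cone_generators(2)[OF that]] by (simp add: w inner_commute)
  moreover have "a j \<bullet> (- d) \<le> e" if "j \<in> J z" for j
    using w_cone[OF lifted_cone_generators(1)[OF that]] by (simp add: w inner_commute)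
  ultimately obtain h where h: "0 < h" "z + h *\<^sub>R (- d) \<in> edom g"
      "gmax (z + h *\<^sub>R (- d)) \<le> gmax z + h * e"
    using descent_step[OF z] by blast
  from sub[OF h(2)] h(3) have "h * (- (v \<bullet> d)) \<le> h * e"
    by simp
  with h(1) have "- (v \<bullet> d) \<le> e"
    by (simp only: mult_le_cancel_left_pos)
  with w_v show False
    by (simp add: w inner_commute)
qed

lemma lifted_cone_imp_subgradient:
  assumes z: "z \<in> edom g" and v: "(v, 1) \<in> lifted_cone a b (J z) (I z)"
  shows "v \<in> subdiff g z"
proof -
  define S where "S = {x. \<forall>y\<in>edom g. (y - z, gmax z - gmax y) \<bullet> x \<le> 0}"
  have "convex_cone S"
    unfolding convex_cone_iff S_def
    by (auto simp: inner_add_right mult_nonneg_nonpos add_nonpos_nonpos)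
  moreover have "(\<lambda>j. (a j, 1)) ` J z \<union> (\<lambda>i. (b i, 0)) ` I z \<subseteq> S"
  proof -
    have "(y - z, gmax z - gmax y) \<bullet> (a j, 1) \<le> 0" if "j \<in> J z" for j y
    proof -
      from that z have "j \<in> {1..l}" "a j \<bullet> z - \<alpha> j = gmax z"
        by (simp_all add: J_eq)
      moreover from \<open>j \<in> {1..l}\<close> have "a j \<bullet> y - \<alpha> j \<le> gmax y"
        by (rule gmax_ge)
      moreover have "(y - z, gmax z - gmax y) \<bullet> (a j, 1)
          = (a j \<bullet> y - \<alpha> j) - (a j \<bullet> z - \<alpha> j) + gmax z - gmax y"
        by (simp add: inner_diff_left inner_diff_right inner_commute)
      ultimately show ?thesis
        by linarith
    qed
    moreover have "(y - z, gmax z - gmax y) \<bullet> (b i, 0) \<le> 0" if "i \<in> I z" "y \<in> edom g" for i y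
      using that by (auto simp: actI_def mem_edom inner_diff_right inner_commute)
    ultimately show ?thesis
      by (auto simp: S_def simp del: inner_Pair)
  qed
  ultimately have "lifted_cone a b (J z) (I z) \<subseteq> S"
    unfolding lifted_cone_def by (rule hull_minimal[rotated])
  with v have v_S: "(y - z, gmax z - gmax y) \<bullet> (v, 1) \<le> 0" if "y \<in> edom g" for y
    using that by (auto simp: S_def)
  have "gmax z + v \<bullet> (y - z) \<le> gmax y" if "y \<in> edom g" for y
  proof -
    have "(y - z) \<bullet> v + (gmax z - gmax y) * 1 \<le> 0"
      using v_S[OF that] unfolding inner_Pair inner_real_def .
    then show ?thesis
      unfolding inner_commute[of "y - z" v] by simp
  qed
  with z show ?thesis
    by (simp add: subdiff_g_iff)
qed

lemma subgradient_near_imp_subgradient: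
  obtains r where "0 < r" "\<And>z v. v \<in> subdiff g z \<Longrightarrow> dist lb v \<le> r \<Longrightarrow> lb \<in> subdiff g z"
proof -
  let ?cones = "(\<lambda>(J', I'). lifted_cone a b J' I') ` (Pow {1..l} \<times> Pow {1..s})"
  have "closed C" if "C \<in> ?cones" for C
    using that by (auto intro!: closed_lifted_cone intro: finite_subset)
  moreover have "finite ?cones"
    by simp
  ultimately obtain r where "0 < r"
    and r: "\<And>C y. C \<in> ?cones \<Longrightarrow> y \<in> C \<Longrightarrow> dist (lb, 1) y \<le> r \<Longrightarrow> (lb, 1) \<in> C"
    using finite_closed_sets_uniform_radius[of ?cones "(lb, 1)"] by blast
  show thesis
  proof (rule that[OF \<open>0 < r\<close>])
    fix z v assume v: "v \<in> subdiff g z" and "dist lb v \<le> r"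
    then have "dist (lb, 1) (v, 1) \<le> r"
      by (simp add: dist_Pair_Pair)
    moreover have "lifted_cone a b (J z) (I z) \<in> ?cones"
      using J_subset I_subset by blast
    ultimately have "(lb, 1) \<in> lifted_cone a b (J z) (I z)"
      using r subgradient_imp_lifted_cone[OF v] by blast
    with v show "lb \<in> subdiff g z"
      using lifted_cone_imp_subgradient by (simp add: subdiff_g_iff)
  qed
qed

lemma common_subgradient_active_sets:
  assumes lb_zb: "lb \<in> subdiff g zb" and lb_z: "lb \<in> subdiff g z"
    and \<sigma>_nonneg: "\<forall>j\<in>J zb. 0 \<le> \<sigma> j" and \<sigma>_sum: "(\<Sum>j\<in>J zb. \<sigma> j) = 1"
    and \<tau>_nonneg: "\<forall>i\<in>I zb. 0 \<le> \<tau> i"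
    and lb: "lb = (\<Sum>j\<in>J zb. \<sigma> j *\<^sub>R a j) + (\<Sum>i\<in>I zb. \<tau> i *\<^sub>R b i)"
  shows "{j\<in>J zb. 0 < \<sigma> j} \<subseteq> J z \<and> {i\<in>I zb. 0 < \<tau> i} \<subseteq> I z"
proof -
  from lb_zb lb_z have zb: "zb \<in> edom g" and z: "z \<in> edom g"
    by (simp_all add: subdiff_g_iff)
  from subdiff_common_eq[OF lb_zb lb_z] zb z
  have affine: "gmax z = gmax zb + lb \<bullet> (z - zb)"
    by (simp add: g_eq_gmax)
  define A where "A j = a j \<bullet> z - \<alpha> j - gmax z" for j
  define B where "B i = b i \<bullet> z - \<beta> i" for i
  have A_nonpos: "\<forall>j\<in>J zb. A j \<le> 0"
    using gmax_ge zb by (auto simp: A_def J_eq)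
  have B_nonpos: "\<forall>i\<in>I zb. B i \<le> 0"
    using z by (auto simp: B_def actI_def mem_edom)
  have "lb \<bullet> (z - zb) = (\<Sum>j\<in>J zb. \<sigma> j * (a j \<bullet> (z - zb))) + (\<Sum>i\<in>I zb. \<tau> i * (b i \<bullet> (z - zb)))"
    unfolding lb by (simp add: inner_add_left inner_sum_left)
  also have "(\<Sum>j\<in>J zb. \<sigma> j * (a j \<bullet> (z - zb))) = (\<Sum>j\<in>J zb. \<sigma> j * A j + \<sigma> j * (gmax z - gmax zb))"
    using zb by (intro sum.cong) (auto simp: A_def J_eq inner_diff_right algebra_simps)
  also have "\<dots> = (\<Sum>j\<in>J zb. \<sigma> j * A j) + (gmax z - gmax zb)"
    by (simp add: sum.distrib \<sigma>_sum flip: sum_distrib_right)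
  also have "(\<Sum>i\<in>I zb. \<tau> i * (b i \<bullet> (z - zb))) = (\<Sum>i\<in>I zb. \<tau> i * B i)"
    by (intro sum.cong) (auto simp: B_def actI_def inner_diff_right)
  finally have "(\<Sum>j\<in>J zb. \<sigma> j * A j) + (\<Sum>i\<in>I zb. \<tau> i * B i) = 0"
    using affine by linarith
  moreover have "(\<Sum>j\<in>J zb. \<sigma> j * A j) \<le> 0" "(\<Sum>i\<in>I zb. \<tau> i * B i) \<le> 0"
    using \<sigma>_nonneg A_nonpos \<tau>_nonneg B_nonpos by (auto intro!: sum_nonpos mult_nonneg_nonpos)
  ultimately have "(\<Sum>j\<in>J zb. \<sigma> j * A j) = 0" "(\<Sum>i\<in>I zb. \<tau> i * B i) = 0"
    by linarith+
  then have "A j = 0" if "j \<in> J zb" "0 < \<sigma> j" for j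
    using weighted_sum_nonpos_eq_0D[OF finite_J \<sigma>_nonneg A_nonpos _ that] by blast
  moreover from \<open>(\<Sum>i\<in>I zb. \<tau> i * B i) = 0\<close> have "B i = 0" if "i \<in> I zb" "0 < \<tau> i" for i
    using weighted_sum_nonpos_eq_0D[OF finite_I \<tau>_nonneg B_nonpos _ that] by blast
  ultimately show ?thesis
    using z J_subset by (fastforce simp: A_def B_def J_eq actI_def)
qed

end

theorem lemma2p1:
  fixes a b :: "nat \<Rightarrow> real^'m" and \<alpha> \<beta> :: "nat \<Rightarrow> real" and l s :: nat
    and g :: "real^'m \<Rightarrow> ereal" and zb lb :: "real^'m"
  assumes "l \<ge> 1"
    and "g = polyfun a \<alpha> b \<beta> l s"
    and "(zb, lb) \<in> gph_subdiff g"
  shows "\<exists>r>0. \<forall>\<sigma> \<tau>.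
           ((\<forall>j\<in>actJ g a \<alpha> l zb. \<sigma> j \<ge> 0) \<and> (\<forall>i\<in>actI b \<beta> s zb. \<tau> i \<ge> 0) \<and>
            (\<Sum>j\<in>actJ g a \<alpha> l zb. \<sigma> j) = 1 \<and>
            lb = (\<Sum>j\<in>actJ g a \<alpha> l zb. \<sigma> j *\<^sub>R a j) + (\<Sum>i\<in>actI b \<beta> s zb. \<tau> i *\<^sub>R b i))
           \<longrightarrow> (\<forall>z v. (z, v) \<in> gph_subdiff g \<and> (z, v) \<in> cball (zb, lb) r \<longrightarrow>
                 {j\<in>actJ g a \<alpha> l zb. \<sigma> j > 0} \<subseteq> actJ g a \<alpha> l z \<and>
                 {i\<in>actI b \<beta> s zb. \<tau> i > 0} \<subseteq> actI b \<beta> s z)"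
proof -
  interpret polyhedral_function a \<alpha> b \<beta> l s
    using assms(1) by unfold_locales
  from assms(2,3) have lb_zb: "lb \<in> subdiff g zb"
    by (simp add: gph_subdiff_def)
  obtain r where "0 < r" and r: "\<And>z v. v \<in> subdiff g z \<Longrightarrow> dist lb v \<le> r \<Longrightarrow> lb \<in> subdiff g z"
    using subgradient_near_imp_subgradient unfolding assms(2) by blast
  have "{j\<in>actJ g a \<alpha> l zb. 0 < \<sigma> j} \<subseteq> actJ g a \<alpha> l z \<and> {i\<in>actI b \<beta> s zb. 0 < \<tau> i} \<subseteq> actI b \<beta> s z"
    if decomposition: "(\<forall>j\<in>actJ g a \<alpha> l zb. 0 \<le> \<sigma> j) \<and> (\<forall>i\<in>actI b \<beta> s zb. 0 \<le> \<tau> i)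
        \<and> (\<Sum>j\<in>actJ g a \<alpha> l zb. \<sigma> j) = 1
        \<and> lb = (\<Sum>j\<in>actJ g a \<alpha> l zb. \<sigma> j *\<^sub>R a j) + (\<Sum>i\<in>actI b \<beta> s zb. \<tau> i *\<^sub>R b i)"
      and graph: "(z, v) \<in> gph_subdiff g" and near: "(z, v) \<in> cball (zb, lb) r"
    for \<sigma> \<tau> z v
  proof -
    have "dist lb v \<le> r"
      using order_trans[OF dist_snd_le near[unfolded mem_cball]] by simp
    with graph r have "lb \<in> subdiff g z"
      by (simp add: gph_subdiff_def)
    with lb_zb decomposition show ?thesis
      unfolding assms(2) by (intro common_subgradient_active_sets) auto
  qed
  with \<open>0 < r\<close> show ?thesis
    by blast
qed

end
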